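(* Let $S = \{ x \in \mathbb{R}^n \mid h_i^T x \leq 1,\ i = 1, \dots ,r \}$, $A \in \mathbb{R}^{n \times n}$, $\gamma \geq 0$, $c \in \mathbb{R}^n$, and consider the semidefinite program \begin{align*} \min_{x \in \mathbb{R}^n,\, Q \in \mathbb{S}^{n \times n},\, \lambda \in \mathbb{R}} \quad & c^T x\\ \textrm{s.t.} \quad & Q \succ 0, \\ & \begin{bmatrix} Q - A Q A^T & -A Q \\ -Q A^T & -Q \end{bmatrix} \succeq \lambda \begin{bmatrix} \gamma^2 I & 0 \\ 0 & -I \end{bmatrix}, \\ & h_i^T Q h_i \leq 1 \quad i = 1, \dots, r, \\ & \begin{bmatrix} Q & x \\ x^T & 1 \end{bmatrix} \succeq 0, \\ & \lambda \geq 0. \end{align*} Let $\tilde{S}^{\infty}_{\gamma}(A)$ be the projection to $x$-space of the feasible region of this program, and let $S^{\infty}_{\gamma}(A)$ be the set of $x \in S$ such that $f^t(x) \in S$ for all $t = 1,2,\dots$ and all maps $f(x) = Ax + g(x)$ with $g \in \{ g : \mathbb{R}^n \to \mathbb{R}^n \mid \|g(x)\| \leq \gamma \|x\|\ \forall x \in S\}$ ($\ell_2$ norm). Then $\tilde{S}^{\infty}_{\gamma}(A) \subseteq S^{\infty}_{\gamma}(A)$.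
   Context: $\mathbb{S}^{n \times n}$ denotes the space of real symmetric $n\times n$ matrices; $\succ$ and $\succeq$ denote positive definite and positive semidefinite orderings. *)

theory Defs
  imports "HOL-Analysis.Analysis"
begin

text \<open>Positive (semi)definiteness via the quadratic form (the standard definition;
  all matrices below are symmetric whenever Q is).\<close>
definition psd :: "real^'n^'n \<Rightarrow> bool" where
  "psd M \<longleftrightarrow> (\<forall>v. 0 \<le> v \<bullet> (M *v v))"

definition pd :: "real^'n^'n \<Rightarrow> bool" where
  "pd M \<longleftrightarrow> (\<forall>v. v \<noteq> 0 \<longrightarrow> 0 < v \<bullet> (M *v v))"

definition block ::
  "real^'n^'n \<Rightarrow> real^'m^'n \<Rightarrow> real^'n^'m \<Rightarrow> real^'m^'m \<Rightarrow> real^('n+'m)^('n+'m)" where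
  "block M11 M12 M21 M22 = (\<chi> i j. case i of
       Inl a \<Rightarrow> (case j of Inl b \<Rightarrow> M11$a$b | Inr b \<Rightarrow> M12$a$b)
     | Inr a \<Rightarrow> (case j of Inl b \<Rightarrow> M21$a$b | Inr b \<Rightarrow> M22$a$b))"

definition col :: "real^'n \<Rightarrow> real^unit^'n" where
  "col x = (\<chi> a u. x$a)"

definition row :: "real^'n \<Rightarrow> real^'n^unit" where
  "row x = (\<chi> u b. x$b)"

definition polyS :: "nat \<Rightarrow> (nat \<Rightarrow> real^'n) \<Rightarrow> (real^'n) set" where
  "polyS r h = {x. \<forall>i\<in>{1..r}. h i \<bullet> x \<le> 1}"

definition S_tilde :: "nat \<Rightarrow> (nat \<Rightarrow> real^'n) \<Rightarrow> real^'n^'n \<Rightarrow> real \<Rightarrow> (real^'n) set" where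
  "S_tilde r h A \<gamma> = {x. \<exists>Q (lam::real).
      transpose Q = Q \<and>
      pd Q \<and>
      psd (block (Q - A ** Q ** transpose A) (- (A ** Q)) (- (Q ** transpose A)) (- Q)
           - lam *\<^sub>R block ((\<gamma>^2) *\<^sub>R mat 1) 0 0 (- mat 1)) \<and>
      (\<forall>i\<in>{1..r}. h i \<bullet> (Q *v h i) \<le> 1) \<and>
      psd (block Q (col x) (row x) (mat 1 :: real^unit^unit)) \<and>
      lam \<ge> 0}"

definition G_set :: "(real^'n) set \<Rightarrow> real \<Rightarrow> (real^'n \<Rightarrow> real^'n) set" where
  "G_set S \<gamma> = {g. \<forall>x\<in>S. norm (g x) \<le> \<gamma> * norm x}"

definition S_inf :: "nat \<Rightarrow> (nat \<Rightarrow> real^'n) \<Rightarrow> real^'n^'n \<Rightarrow> real \<Rightarrow> (real^'n) set" where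
  "S_inf r h A \<gamma> = {x \<in> polyS r h. \<forall>g \<in> G_set (polyS r h) \<gamma>. \<forall>t::nat. t \<ge> 1 \<longrightarrow>
      ((\<lambda>y. A *v y + g y) ^^ t) x \<in> polyS r h}"

end

theory Submission
  imports Defs
begin

text \<open>The constraint [[Q, x], [x', 1]] \<succeq> 0 places x in the ellipsoid E = {y | y' Q^-1 y \<le> 1},
  and h_i' Q h_i \<le> 1 places E inside S. Evaluating the other LMI at a vector (u, w) gives,
  by the S-procedure, (A' u + w)' Q (A' u + w) \<le> u' Q u whenever |w| \<le> \<gamma> |u|. In terms of the
  support function v \<mapsto> sqrt (v' Q v) of E this says that E is mapped into itself by every
  y \<mapsto> A y + d with |d| \<le> \<gamma> |y|, so every orbit starting at x stays in E \<subseteq> S.\<close>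

lemma sum_UNIV_Plus:
  "sum f (UNIV :: ('a::finite + 'b::finite) set) =
     (\<Sum>a\<in>UNIV. f (Inl a)) + (\<Sum>b\<in>UNIV. f (Inr b))"
  using sum.Plus[of "UNIV::'a set" "UNIV::'b set" f] by (simp add: o_def)

definition vec_join :: "real^'n \<Rightarrow> real^'m \<Rightarrow> real^('n+'m)" where
  "vec_join u w = (\<chi> i. case i of Inl a \<Rightarrow> u$a | Inr b \<Rightarrow> w$b)"

lemma inner_block_vec_join:
  fixes M11 :: "real^'n^'n" and M12 :: "real^'m^'n" and M21 :: "real^'n^'m" and M22 :: "real^'m^'m"
  shows "vec_join u w \<bullet> (block M11 M12 M21 M22 *v vec_join u w) =
    u \<bullet> (M11 *v u) + u \<bullet> (M12 *v w) + w \<bullet> (M21 *v u) + w \<bullet> (M22 *v w)"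
  by (simp add: inner_vec_def matrix_vector_mult_def block_def vec_join_def sum_UNIV_Plus
      ring_distribs sum_distrib_left sum.distrib)

lemma matrix_vector_mult_uminus: "(- M) *v x = - (M *v (x::real^_))"
  by (simp add: vec_eq_iff matrix_vector_mult_def sum_negf)

abbreviation robust_lmi ::
  "real^'n^'n \<Rightarrow> real \<Rightarrow> real^'n^'n \<Rightarrow> real \<Rightarrow> real^('n+'n)^('n+'n)" where
  "robust_lmi A \<gamma> Q lam \<equiv>
     block (Q - A ** Q ** transpose A) (- (A ** Q)) (- (Q ** transpose A)) (- Q)
     - lam *\<^sub>R block ((\<gamma>^2) *\<^sub>R mat 1) 0 0 (- mat 1)"

lemma quadratic_form_robust_lmi:
  "vec_join u w \<bullet> (robust_lmi A \<gamma> Q lam *v vec_join u w) =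
     u \<bullet> (Q *v u) - (u v* A + w) \<bullet> (Q *v (u v* A + w)) - lam * (\<gamma>^2 * (u \<bullet> u) - w \<bullet> w)"
proof -
  have "u \<bullet> ((A ** Q ** transpose A) *v u) = (u v* A) \<bullet> (Q *v (u v* A))"
    by (simp add: matrix_vector_mul_assoc[symmetric] dot_lmul_matrix)
  moreover have "u \<bullet> ((A ** Q) *v w) = (u v* A) \<bullet> (Q *v w)"
    by (simp add: matrix_vector_mul_assoc[symmetric] dot_lmul_matrix)
  moreover have "w \<bullet> ((Q ** transpose A) *v u) = w \<bullet> (Q *v (u v* A))"
    by (simp add: matrix_vector_mul_assoc[symmetric])
  ultimately show ?thesis
    by (simp add: inner_block_vec_join matrix_vector_mult_diff_rdistrib
      scaleR_matrix_vector_assoc[symmetric] matrix_vector_mult_uminus matrix_vector_right_distrib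
      inner_diff_right inner_add_left inner_add_right algebra_simps)
qed

lemma robust_lmi_contracts:
  assumes "psd (robust_lmi A \<gamma> Q lam)" and "lam \<ge> 0" and "w \<bullet> w \<le> \<gamma>^2 * (u \<bullet> u)"
  shows "(u v* A + w) \<bullet> (Q *v (u v* A + w)) \<le> u \<bullet> (Q *v u)"
proof -
  have "0 \<le> vec_join u w \<bullet> (robust_lmi A \<gamma> Q lam *v vec_join u w)"
    using assms(1) unfolding psd_def by blast
  moreover have "0 \<le> lam * (\<gamma>^2 * (u \<bullet> u) - w \<bullet> w)"
    using assms(2,3) by simp
  ultimately show ?thesis
    unfolding quadratic_form_robust_lmi by linarith
qed

text \<open>For Q \<succ> 0 this is {y | y' Q^-1 y \<le> 1}; the support-function form avoids the inverse.\<close>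
definition ellipsoid :: "real^'n^'n \<Rightarrow> (real^'n) set" where
  "ellipsoid Q = {y. \<forall>v. v \<bullet> y \<le> sqrt (v \<bullet> (Q *v v))}"

lemma psd_block_imp_in_ellipsoid:
  fixes Q :: "real^'n^'n"
  assumes "psd (block Q (col x) (row x) (mat 1 :: real^unit^unit))"
  shows "x \<in> ellipsoid Q"
  unfolding ellipsoid_def
proof (intro CollectI allI)
  fix v :: "real^'n"
  define z :: "real^('n+unit)" where "z = vec_join v (\<chi> _. - (v \<bullet> x))"
  have "0 \<le> z \<bullet> (block Q (col x) (row x) (mat 1) *v z)"
    using assms unfolding psd_def by blast
  also have "\<dots> = v \<bullet> (Q *v v) - (v \<bullet> x)\<^sup>2"
    unfolding z_def inner_block_vec_join
    by (simp add: inner_vec_def matrix_vector_mult_def col_def row_def mat_def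
        UNIV_unit power2_eq_square sum_negf sum_distrib_left sum_distrib_right algebra_simps)
  finally have "(v \<bullet> x)\<^sup>2 \<le> v \<bullet> (Q *v v)" by simp
  then show "v \<bullet> x \<le> sqrt (v \<bullet> (Q *v v))"
    by (metis real_le_rsqrt)
qed

lemma ellipsoid_subset_polyS:
  assumes "\<forall>i\<in>{1..r}. h i \<bullet> (Q *v h i) \<le> 1"
  shows "ellipsoid Q \<subseteq> polyS r h"
proof
  fix y assume "y \<in> ellipsoid Q"
  then have "h i \<bullet> y \<le> sqrt (h i \<bullet> (Q *v h i))" for i
    unfolding ellipsoid_def by blast
  also have "sqrt (h i \<bullet> (Q *v h i)) \<le> 1" if "i \<in> {1..r}" for i
    using assms that by simp
  finally show "y \<in> polyS r h"
    unfolding polyS_def by blast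
qed

lemma ellipsoid_perturbed_image:
  fixes A Q :: "real^'n^'n"
  assumes contracts: "\<And>u w. w \<bullet> w \<le> \<gamma>\<^sup>2 * (u \<bullet> u) \<Longrightarrow>
      (u v* A + w) \<bullet> (Q *v (u v* A + w)) \<le> u \<bullet> (Q *v u)"
    and "\<gamma> \<ge> 0" and y: "y \<in> ellipsoid Q" and d: "norm d \<le> \<gamma> * norm y"
  shows "A *v y + d \<in> ellipsoid Q"
proof (cases "y = 0")
  case True
  with d y show ?thesis by simp
next
  case False
  show ?thesis
    unfolding ellipsoid_def
  proof (intro CollectI allI)
    fix u :: "real^'n"
    \<comment> \<open>the admissible perturbation that looks largest from direction u\<close>
    define w where "w = (\<gamma> * norm u / norm y) *\<^sub>R y"
    have "norm w = \<gamma> * norm u"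
      using False \<open>\<gamma> \<ge> 0\<close> by (simp add: w_def)
    then have "w \<bullet> w \<le> \<gamma>\<^sup>2 * (u \<bullet> u)"
      by (simp add: power2_norm_eq_inner[symmetric] power_mult_distrib)
    have "u \<bullet> d \<le> norm u * (\<gamma> * norm y)"
      using norm_cauchy_schwarz[of u d] mult_left_mono[OF d norm_ge_zero[of u]] by linarith
    also have "\<dots> = w \<bullet> y"
      using False by (simp add: w_def power2_norm_eq_inner[symmetric] power2_eq_square)
    finally have "u \<bullet> (A *v y + d) \<le> (u v* A + w) \<bullet> y"
      by (simp add: inner_add_left inner_add_right dot_lmul_matrix)
    also have "\<dots> \<le> sqrt ((u v* A + w) \<bullet> (Q *v (u v* A + w)))"
      using y unfolding ellipsoid_def by blast
    also have "\<dots> \<le> sqrt (u \<bullet> (Q *v u))"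
      using contracts \<open>w \<bullet> w \<le> \<gamma>\<^sup>2 * (u \<bullet> u)\<close> by simp
    finally show "u \<bullet> (A *v y + d) \<le> sqrt (u \<bullet> (Q *v u))" .
  qed
qed

lemma funpow_in_invariant_set:
  assumes "\<And>y. y \<in> E \<Longrightarrow> f y \<in> E" and "x \<in> E"
  shows "(f ^^ t) x \<in> E"
  by (induction t) (simp_all add: assms)

theorem lemma26:
  fixes h :: "nat \<Rightarrow> real^'n" and r :: nat and A :: "real^'n^'n" and \<gamma> :: real
  assumes "\<gamma> \<ge> 0"
  shows "S_tilde r h A \<gamma> \<subseteq> S_inf r h A \<gamma>"
proof
  fix x assume "x \<in> S_tilde r h A \<gamma>"
  then obtain Q lam where lmi: "psd (robust_lmi A \<gamma> Q lam)" and "lam \<ge> 0"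
    and facets: "\<forall>i\<in>{1..r}. h i \<bullet> (Q *v h i) \<le> 1"
    and schur: "psd (block Q (col x) (row x) (mat 1 :: real^unit^unit))"
    unfolding S_tilde_def by blast
  have E_sub: "ellipsoid Q \<subseteq> polyS r h"
    using facets by (rule ellipsoid_subset_polyS)
  have x: "x \<in> ellipsoid Q"
    using schur by (rule psd_block_imp_in_ellipsoid)
  have step: "A *v y + g y \<in> ellipsoid Q"
    if g: "g \<in> G_set (polyS r h) \<gamma>" and y: "y \<in> ellipsoid Q" for g y
  proof (rule ellipsoid_perturbed_image[OF robust_lmi_contracts[OF lmi \<open>lam \<ge> 0\<close>] assms y])
    show "norm (g y) \<le> \<gamma> * norm y"
      using g y E_sub unfolding G_set_def by blast
  qed
  show "x \<in> S_inf r h A \<gamma>"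
    unfolding S_inf_def
  proof (intro CollectI conjI ballI allI impI)
    show "x \<in> polyS r h"
      using x E_sub by blast
    fix g t assume "g \<in> G_set (polyS r h) \<gamma>"
    then have "((\<lambda>y. A *v y + g y) ^^ t) x \<in> ellipsoid Q"
      using x step by (blast intro: funpow_in_invariant_set)
    with E_sub show "((\<lambda>y. A *v y + g y) ^^ t) x \<in> polyS r h" by blast
  qed
qed

end
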